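(* Let $\lambda\in\mathbb{C}$ and $n,k\in\mathbb{N}_0$. Then $$\int_{0}^{1}y_{3}(n,k;\lambda;1,x)\,dx=\frac{1}{n+1}\sum_{m=0}^{n}k^{m}\,y_{1}(n-m,k;\lambda),$$ or equivalently $$\int_{0}^{1}y_{3}(n,k;\lambda;1,x)\,dx=\frac{1}{(n+1)k!}\sum_{j=0}^{k}\binom{k}{j}\lambda^{j}\sum_{m=0}^{n}k^{m}j^{n-m}.$$
   Context: For $a,b\in\mathbb{R}$, $\lambda\in\mathbb{C}$ and $k\in\mathbb{N}_0$: the numbers $y_3(n,k;\lambda;a,b)$ are defined by $\frac{e^{bkt}}{k!}(\lambda e^{(a-b)t}+1)^{k}=\sum_{n\ge0}y_{3}(n,k;\lambda;a,b)\frac{t^{n}}{n!}$ (so $y_3(n,k;\lambda;1,x)$ is a polynomial in $x$), and the numbers $y_1(n,k;\lambda)$ by $\frac{1}{k!}(\lambda e^{t}+1)^{k}=\sum_{n\ge0}y_{1}(n,k;\lambda)\frac{t^{n}}{n!}$. Convention: $0^0=1$. *)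

theory Defs
  imports "HOL-Analysis.Analysis" "HOL-Computational_Algebra.Formal_Power_Series"
begin

definition y3 :: "nat \<Rightarrow> nat \<Rightarrow> complex \<Rightarrow> real \<Rightarrow> real \<Rightarrow> complex" where
  "y3 n k lam a b = fact n * fps_nth
     (fps_const (1 / fact k) * fps_exp (complex_of_real (b * real k))
        * (fps_const lam * fps_exp (complex_of_real (a - b)) + 1) ^ k) n"

definition y1 :: "nat \<Rightarrow> nat \<Rightarrow> complex \<Rightarrow> complex" where
  "y1 n k lam = fact n * fps_nth
     (fps_const (1 / fact k) * (fps_const lam * fps_exp 1 + 1) ^ k) n"

end

theory Submission
  imports Defs
begin

text \<open>Expanding the binomial, \<open>y3(n,k;\<lambda>;1,x)\<close> is the combination
  \<open>\<Sum>\<^sub>j (k choose j) \<lambda>^j (j + x (k - j))^n / k!\<close>, and \<open>(j + x (k - j))^n\<close> integrates over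
  \<open>[0,1]\<close> to the divided difference \<open>(k^(n+1) - j^(n+1)) / ((n+1)(k - j)) = \<Sum>\<^sub>m k^m j^(n-m) / (n+1)\<close>.
  The same expansion \<open>y1(n,k;\<lambda>) = \<Sum>\<^sub>j (k choose j) \<lambda>^j j^n / k!\<close> regroups this into the first form.\<close>

lemma fps_exp_mult_binomial_power:
  fixes a b c :: "'a::field_char_0"
  shows "fps_exp b * (fps_const c * fps_exp a + 1) ^ k
    = (\<Sum>j\<le>k. fps_const (of_nat (k choose j) * c ^ j) * fps_exp (b + of_nat j * a))"
proof -
  have "(fps_const c * fps_exp a + 1) ^ k
      = (\<Sum>j\<le>k. of_nat (k choose j) * (fps_const c * fps_exp a) ^ j * 1 ^ (k - j))"
    by (rule binomial_ring)
  also have "\<dots> = (\<Sum>j\<le>k. fps_const (of_nat (k choose j) * c ^ j) * fps_exp (of_nat j * a))"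
    by (intro sum.cong refl)
      (simp add: power_mult_distrib fps_const_power fps_exp_power_mult fps_of_nat[symmetric] mult.assoc)
  finally show ?thesis
    by (simp add: sum_distrib_left fps_exp_add_mult algebra_simps)
qed

lemma fact_mult_nth_fps_exp_mult_binomial_power:
  fixes a b c :: "'a::field_char_0"
  shows "fact n * fps_nth (fps_exp b * (fps_const c * fps_exp a + 1) ^ k) n
    = (\<Sum>j\<le>k. of_nat (k choose j) * c ^ j * (b + of_nat j * a) ^ n)"
  by (simp add: fps_exp_mult_binomial_power fps_sum_nth sum_distrib_left)

lemma y3_closed_form:
  "y3 n k lam 1 x = (\<Sum>j\<le>k. of_nat (k choose j) * lam ^ j *
     complex_of_real ((real j + x * (real k - real j)) ^ n)) / fact k"
proof -
  have "y3 n k lam 1 x = (fact n * fps_nth (fps_exp (complex_of_real (x * real k))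
      * (fps_const lam * fps_exp (complex_of_real (1 - x)) + 1) ^ k) n) / fact k"
    unfolding y3_def by (simp add: mult.assoc)
  also have "\<dots> = (\<Sum>j\<le>k. of_nat (k choose j) * lam ^ j *
      complex_of_real ((real j + x * (real k - real j)) ^ n)) / fact k"
    by (simp only: fact_mult_nth_fps_exp_mult_binomial_power) (simp add: algebra_simps)
  finally show ?thesis .
qed

lemma y1_closed_form:
  "y1 n k lam = (\<Sum>j\<le>k. of_nat (k choose j) * lam ^ j * of_nat j ^ n) / fact k"
  using fact_mult_nth_fps_exp_mult_binomial_power[of n 0 lam 1 k]
  by (simp add: y1_def)

lemma has_integral_power_affine_unit_interval:
  fixes a b :: real
  shows "((\<lambda>x. (a + x * (b - a)) ^ n) has_integral
           (\<Sum>m=0..n. b ^ m * a ^ (n - m)) / real (n + 1)) {0..1}"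
proof (cases "a = b")
  case True
  have "(\<Sum>m=0..n. b ^ m * b ^ (n - m)) = (\<Sum>m=0..n. b ^ n)"
    by (intro sum.cong refl) (simp add: power_add[symmetric])
  then show ?thesis
    using True has_integral_const_real[of "b ^ n" 0 1] by simp
next
  case False
  define F where "F x = (a + x * (b - a)) ^ Suc n / (real (Suc n) * (b - a))" for x
  have "(F has_real_derivative (a + x * (b - a)) ^ n) (at x within {0..1})" for x
  proof -
    have "((\<lambda>x. a + x * (b - a)) has_real_derivative b - a) (at x within {0..1})"
      by (auto intro!: derivative_eq_intros)
    from DERIV_cdivide[OF DERIV_power[OF this, of "Suc n"], of "real (Suc n) * (b - a)"]
    show ?thesis
      unfolding F_def using False by (simp del: of_nat_Suc)
  qed
  then have "((\<lambda>x. (a + x * (b - a)) ^ n) has_integral (F 1 - F 0)) {0..1}"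
    by (intro fundamental_theorem_of_calculus)
      (auto simp: has_real_derivative_iff_has_vector_derivative[symmetric])
  moreover have "b ^ Suc n - a ^ Suc n = (b - a) * (\<Sum>m=0..n. b ^ m * a ^ (n - m))"
    unfolding power_diff_sumr2 atLeast0AtMost lessThan_Suc_atMost[symmetric]
    by (simp add: mult.commute)
  then have "F 1 - F 0 = (\<Sum>m=0..n. b ^ m * a ^ (n - m)) / real (n + 1)"
    using False by (simp add: F_def diff_divide_distrib[symmetric] del: of_nat_Suc)
  ultimately show ?thesis by simp
qed

theorem mainTheorem5:
  fixes lam :: complex and n k :: nat
  shows "integral {0..1} (\<lambda>x::real. y3 n k lam 1 x)
           = (1 / of_nat (n + 1)) * (\<Sum>m=0..n. of_nat k ^ m * y1 (n - m) k lam)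
       \<and> integral {0..1} (\<lambda>x::real. y3 n k lam 1 x)
           = (1 / (of_nat (n + 1) * fact k)) *
             (\<Sum>j=0..k. of_nat (k choose j) * lam ^ j *
                 (\<Sum>m=0..n. of_nat k ^ m * of_nat j ^ (n - m)))"
  (is "?I = ?A \<and> ?I = ?B")
proof -
  have "((\<lambda>x::real. y3 n k lam 1 x) has_integral
      (\<Sum>j\<le>k. of_nat (k choose j) * lam ^ j * complex_of_real
         ((\<Sum>m=0..n. real k ^ m * real j ^ (n - m)) / real (n + 1))) / fact k) {0..1}"
    unfolding y3_closed_form
    by (intro has_integral_divide has_integral_sum finite_atMost has_integral_mult_right
        has_integral_of_real has_integral_power_affine_unit_interval)
  then have "?I = ?B"
    by (simp add: integral_unique atLeast0AtMost sum_distrib_left sum_divide_distrib field_simps)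
  moreover have "?A = ?B"
    unfolding y1_closed_form
    by (simp add: atLeast0AtMost sum_distrib_left sum_divide_distrib sum.swap[of _ "{..n}"]
        field_simps)
  ultimately show ?thesis by simp
qed

end
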